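(* (1) For every Priestley space $X$, the lattices $\Phi(\mathcal{E}(X))$ and $\mathcal{E}(X\times \underline{2})$ are isomorphic as bounded lattices. (2) For every bounded distributive lattice $L$, the Priestley spaces $\mathcal{X}(\Phi(L))$ and $\mathcal{X}(L)\times\underline{2}$ are isomorphic in the category of Priestley spaces (i.e. there is an order-isomorphism that is a homeomorphism).
   Context: A Priestley space is a poset $(X,\le)$ with a compact topology such that whenever $x\not\ge y$ there is a clopen down-set $U$ with $x\in U$, $y\notin U$. $\mathcal{E}(X)$ is the bounded distributive lattice of clopen down-sets of $X$ ordered by inclusion. For a bounded distributive lattice $L$, $\mathcal{X}(L)$ is the set of prime ideals of $L$ ordered by inclusion, with topology generated by the sets $X_a=\{I: a\notin I\}$ and their complements, $a\in L$. $\underline{2}$ is the two-element chain $\{0<1\}$ with the discrete topology; products of Priestley spaces carry the product topology and coordinatewise order. For a lattice $L$, $\Phi(L)=\{(a,b)\in L\times L: a\le b\}$ with coordinatewise order, a $(0,1)$-sublattice of $L\times L$. Priestley duality: $L\cong\mathcal{E}(\mathcal{X}(L))$ and $X\cong\mathcal{X}(\mathcal{E}(X))$ naturally. *)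

theory Defs
  imports "HOL-Analysis.Analysis" "HOL-Library.Product_Order"
begin

definition partial_order_on_space :: "'a topology \<Rightarrow> ('a \<Rightarrow> 'a \<Rightarrow> bool) \<Rightarrow> bool" where
  "partial_order_on_space T le \<longleftrightarrow>
     (\<forall>x\<in>topspace T. le x x) \<and>
     (\<forall>x\<in>topspace T. \<forall>y\<in>topspace T. le x y \<and> le y x \<longrightarrow> x = y) \<and>
     (\<forall>x\<in>topspace T. \<forall>y\<in>topspace T. \<forall>z\<in>topspace T. le x y \<and> le y z \<longrightarrow> le x z)"

definition down_set :: "'a topology \<Rightarrow> ('a \<Rightarrow> 'a \<Rightarrow> bool) \<Rightarrow> 'a set \<Rightarrow> bool" where
  "down_set T le U \<longleftrightarrow> U \<subseteq> topspace T \<and> (\<forall>x\<in>U. \<forall>y\<in>topspace T. le y x \<longrightarrow> y \<in> U)"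

definition clopen_down_sets :: "'a topology \<Rightarrow> ('a \<Rightarrow> 'a \<Rightarrow> bool) \<Rightarrow> 'a set set" where
  "clopen_down_sets T le = {U. openin T U \<and> closedin T U \<and> down_set T le U}"

definition priestley_space :: "'a topology \<Rightarrow> ('a \<Rightarrow> 'a \<Rightarrow> bool) \<Rightarrow> bool" where
  "priestley_space T le \<longleftrightarrow> partial_order_on_space T le \<and> compact_space T \<and>
     (\<forall>x\<in>topspace T. \<forall>y\<in>topspace T. \<not> le y x \<longrightarrow>
        (\<exists>U\<in>clopen_down_sets T le. x \<in> U \<and> y \<notin> U))"

text \<open>The product X \<times> 2: product topology with the discrete two-point space
  (bool, False < True), coordinatewise order.\<close>

definition times2_top :: "'a topology \<Rightarrow> ('a \<times> bool) topology" where
  "times2_top T = prod_topology T (discrete_topology (UNIV :: bool set))"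

definition times2_le :: "('a \<Rightarrow> 'a \<Rightarrow> bool) \<Rightarrow> ('a \<times> bool) \<Rightarrow> ('a \<times> bool) \<Rightarrow> bool" where
  "times2_le le p q \<longleftrightarrow> le (fst p) (fst q) \<and> snd p \<le> snd q"

definition Phi :: "'b::order set \<Rightarrow> ('b \<times> 'b) set" where
  "Phi S = {(a, b). a \<in> S \<and> b \<in> S \<and> a \<le> b}"

definition bdd_lattice_iso_Phi_E ::
  "'a topology \<Rightarrow> ('a \<Rightarrow> 'a \<Rightarrow> bool) \<Rightarrow> ('a set \<times> 'a set \<Rightarrow> ('a \<times> bool) set) \<Rightarrow> bool" where
  "bdd_lattice_iso_Phi_E T le f \<longleftrightarrow>
     bij_betw f (Phi (clopen_down_sets T le)) (clopen_down_sets (times2_top T) (times2_le le)) \<and>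
     (\<forall>p\<in>Phi (clopen_down_sets T le). \<forall>q\<in>Phi (clopen_down_sets T le).
        f (fst p \<inter> fst q, snd p \<inter> snd q) = f p \<inter> f q \<and>
        f (fst p \<union> fst q, snd p \<union> snd q) = f p \<union> f q) \<and>
     f ({}, {}) = {} \<and>
     f (topspace T, topspace T) = topspace (times2_top T)"

text \<open>Ideals of a sublattice S of an ambient lattice type (operations inherited).\<close>

definition ideal_in :: "'b::lattice set \<Rightarrow> 'b set \<Rightarrow> bool" where
  "ideal_in S I \<longleftrightarrow> I \<subseteq> S \<and> I \<noteq> {} \<and>
     (\<forall>x\<in>I. \<forall>y\<in>S. y \<le> x \<longrightarrow> y \<in> I) \<and> (\<forall>x\<in>I. \<forall>y\<in>I. sup x y \<in> I)"

definition prime_ideal_in :: "'b::lattice set \<Rightarrow> 'b set \<Rightarrow> bool" where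
  "prime_ideal_in S I \<longleftrightarrow> ideal_in S I \<and> I \<noteq> S \<and>
     (\<forall>x\<in>S. \<forall>y\<in>S. inf x y \<in> I \<longrightarrow> x \<in> I \<or> y \<in> I)"

definition spec :: "'b::lattice set \<Rightarrow> 'b set set" where
  "spec S = {I. prime_ideal_in S I}"

definition spec_X :: "'b::lattice set \<Rightarrow> 'b \<Rightarrow> 'b set set" where
  "spec_X S a = {I \<in> spec S. a \<notin> I}"

definition spec_top :: "'b::lattice set \<Rightarrow> 'b set topology" where
  "spec_top S = topology_generated_by
      ((spec_X S ` S) \<union> ((\<lambda>a. spec S - spec_X S a) ` S))"

definition priestley_iso_spec_Phi ::
  "(('a::{bounded_lattice,distrib_lattice} \<times> 'a) set \<Rightarrow> 'a set \<times> bool) \<Rightarrow> bool" where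
  "priestley_iso_spec_Phi g \<longleftrightarrow>
     bij_betw g (spec (Phi (UNIV :: 'a set))) (spec (UNIV :: 'a set) \<times> (UNIV :: bool set)) \<and>
     (\<forall>I\<in>spec (Phi (UNIV :: 'a set)). \<forall>J\<in>spec (Phi (UNIV :: 'a set)).
        I \<subseteq> J \<longleftrightarrow> (fst (g I) \<subseteq> fst (g J) \<and> snd (g I) \<le> snd (g J))) \<and>
     homeomorphic_map (spec_top (Phi (UNIV :: 'a set)))
        (prod_topology (spec_top (UNIV :: 'a set)) (discrete_topology (UNIV :: bool set))) g"

end

theory Submission
  imports Defs
begin

text \<open>
  Part (1). A subset of X \<times> 2 is a pair of "levels": its slice A over True and its slice
  B over False. It is a down-set iff both slices are down-sets and A \<subseteq> B (the latter
  because (x, False) \<le> (x, True)), and it is clopen iff both slices are clopen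
  (preimages under the continuous sections x \<mapsto> (x, b)). Hence
  (A, B) \<mapsto> A \<times> {True} \<union> B \<times> {False} is a bijection from \<Phi>(E(X)) onto E(X \<times> 2), and it
  obviously preserves intersections, unions and the bounds.

  Part (2). In \<Phi>(L) we have (a, b) = (a, a) \<or> ((a, b) \<and> (\<bottom>, \<top>)) and
  (a, b) \<and> (\<bottom>, \<top>) \<le> (\<bottom>, b). So a prime ideal I of \<Phi>(L) is determined by the prime
  ideal P = {a. (a, a) \<in> I} of L together with the flag i = ((\<bottom>, \<top>) \<in> I): (a, b) \<in> I
  iff a \<in> P (if i) resp. b \<in> P (if not i). Conversely every pair (P, i) arises this
  way. The two translations are mutually inverse, monotone, and pull subbasic sets
  back to (finite unions of products of) subbasic sets, so they form an isomorphism of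
  Priestley spaces X(\<Phi>(L)) \<cong> X(L) \<times> 2. Boundedness of L suffices.
\<close>

section \<open>Clopen down-sets of X \<times> 2\<close>

definition two_level_set :: "'x set \<Rightarrow> 'x set \<Rightarrow> ('x \<times> bool) set" where
  "two_level_set A B = A \<times> {True} \<union> B \<times> {False}"

lemma two_level_set_eq_iff:
  "two_level_set A B = two_level_set C D \<longleftrightarrow> A = C \<and> B = D"
  unfolding two_level_set_def by blast

lemma two_level_set_Int:
  "two_level_set (A \<inter> C) (B \<inter> D) = two_level_set A B \<inter> two_level_set C D"
  unfolding two_level_set_def by blast

lemma two_level_set_Un:
  "two_level_set (A \<union> C) (B \<union> D) = two_level_set A B \<union> two_level_set C D"
  unfolding two_level_set_def by blast

lemma two_level_set_slices:
  fixes D :: "('x \<times> bool) set"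
  shows "two_level_set {x. (x, True) \<in> D} {x. (x, False) \<in> D} = D"
proof (rule set_eqI)
  fix p :: "'x \<times> bool"
  show "p \<in> two_level_set {x. (x, True) \<in> D} {x. (x, False) \<in> D} \<longleftrightarrow> p \<in> D"
    by (cases p; cases "snd p") (auto simp: two_level_set_def)
qed

lemma continuous_map_level:
  "continuous_map T (times2_top T) (\<lambda>x. (x, b))"
  unfolding times2_top_def by (intro continuous_map_pairedI) auto

lemma openin_times2_slice:
  "openin (times2_top T) D \<Longrightarrow> openin T {x \<in> topspace T. (x, b) \<in> D}"
  using openin_continuous_map_preimage[OF continuous_map_level] by blast

lemma closedin_times2_slice:
  "closedin (times2_top T) D \<Longrightarrow> closedin T {x \<in> topspace T. (x, b) \<in> D}"
  using closedin_continuous_map_preimage[OF continuous_map_level] by blast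

lemma two_level_set_in_clopen_down_sets_iff:
  assumes refl: "\<And>x. x \<in> topspace T \<Longrightarrow> le x x"
  shows "two_level_set A B \<in> clopen_down_sets (times2_top T) (times2_le le)
    \<longleftrightarrow> (A, B) \<in> Phi (clopen_down_sets T le)"
proof
  assume D: "two_level_set A B \<in> clopen_down_sets (times2_top T) (times2_le le)"
  let ?D = "two_level_set A B"
  have down: "down_set (times2_top T) (times2_le le) ?D"
    using D by (simp add: clopen_down_sets_def)
  then have sub: "A \<subseteq> topspace T" "B \<subseteq> topspace T"
    by (auto simp: down_set_def times2_top_def two_level_set_def)
  have slices: "{x \<in> topspace T. (x, True) \<in> ?D} = A" "{x \<in> topspace T. (x, False) \<in> ?D} = B"
    using sub by (auto simp: two_level_set_def)
  have "openin (times2_top T) ?D" "closedin (times2_top T) ?D"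
    using D by (simp_all add: clopen_down_sets_def)
  then have clopen: "openin T A" "closedin T A" "openin T B" "closedin T B"
    using openin_times2_slice closedin_times2_slice by (metis slices)+
  have lower: "(y, c) \<in> ?D" if "(x, b) \<in> ?D" "y \<in> topspace T" "le y x" "c \<le> b" for x y b c
    using down that by (auto simp: down_set_def times2_top_def times2_le_def)
  have "down_set T le A" "down_set T le B"
    using sub lower[of _ True _ True] lower[of _ False _ False]
    by (auto simp: down_set_def two_level_set_def)
  moreover have "A \<subseteq> B"
    using sub refl lower[of _ True _ False] by (auto simp: two_level_set_def)
  ultimately show "(A, B) \<in> Phi (clopen_down_sets T le)"
    using clopen by (simp add: Phi_def clopen_down_sets_def)
next
  assume "(A, B) \<in> Phi (clopen_down_sets T le)"
  then have A: "openin T A" "closedin T A" "down_set T le A"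
    and B: "openin T B" "closedin T B" "down_set T le B" and "A \<subseteq> B"
    by (auto simp: Phi_def clopen_down_sets_def)
  have "openin (times2_top T) (two_level_set A B)" "closedin (times2_top T) (two_level_set A B)"
    unfolding two_level_set_def times2_top_def
    by (simp_all add: openin_Un closedin_Un openin_prod_Times_iff closedin_prod_Times_iff A B)
  moreover have "down_set (times2_top T) (times2_le le) (two_level_set A B)"
    using A(3) B(3) \<open>A \<subseteq> B\<close>
    by (auto simp: down_set_def times2_top_def times2_le_def two_level_set_def)
  ultimately show "two_level_set A B \<in> clopen_down_sets (times2_top T) (times2_le le)"
    by (simp add: clopen_down_sets_def)
qed

theorem Phi_clopen_down_sets_iso:
  fixes T :: "'x topology"
  assumes refl: "\<And>x. x \<in> topspace T \<Longrightarrow> le x x"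
  shows "bdd_lattice_iso_Phi_E T le (\<lambda>(A, B). two_level_set A B)"
proof -
  let ?f = "\<lambda>(A, B). two_level_set A B"
  note level_iff = two_level_set_in_clopen_down_sets_iff[of T le, OF refl]
  have "?f ` Phi (clopen_down_sets T le) = clopen_down_sets (times2_top T) (times2_le le)"
  proof (intro equalityI subsetI)
    fix D assume D: "D \<in> clopen_down_sets (times2_top T) (times2_le le)"
    let ?A = "{x. (x, True) \<in> D}" and ?B = "{x. (x, False) \<in> D}"
    have "D = ?f (?A, ?B)" by (simp add: two_level_set_slices)
    moreover have "(?A, ?B) \<in> Phi (clopen_down_sets T le)"
      using D level_iff[of ?A ?B]
      by (simp add: two_level_set_slices)
    ultimately show "D \<in> ?f ` Phi (clopen_down_sets T le)" by blast
  qed (auto simp: level_iff)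
  moreover have "inj_on ?f (Phi (clopen_down_sets T le))"
    by (auto intro!: inj_onI simp: two_level_set_eq_iff)
  moreover have "two_level_set {} {} = {}"
    "two_level_set (topspace T) (topspace T) = topspace (times2_top T)"
    by (auto simp: two_level_set_def times2_top_def)
  ultimately show ?thesis
    unfolding bdd_lattice_iso_Phi_E_def bij_betw_def
    by (simp add: split_beta two_level_set_Int two_level_set_Un)
qed

section \<open>Prime ideals\<close>

lemma
  assumes "I \<in> spec S"
  shows spec_subset: "I \<subseteq> S"
    and spec_lower: "\<lbrakk>x \<in> I; y \<in> S; y \<le> x\<rbrakk> \<Longrightarrow> y \<in> I"
    and spec_sup: "\<lbrakk>x \<in> I; y \<in> I\<rbrakk> \<Longrightarrow> sup x y \<in> I"
    and spec_prime: "\<lbrakk>x \<in> S; y \<in> S; inf x y \<in> I\<rbrakk> \<Longrightarrow> x \<in> I \<or> y \<in> I"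
  using assms unfolding spec_def prime_ideal_in_def ideal_in_def by blast+

lemma spec_bot:
  fixes S :: "'b::bounded_lattice set"
  assumes I: "I \<in> spec S" and "bot \<in> S"
  shows "bot \<in> I"
proof -
  obtain x where "x \<in> I"
    using I by (auto simp: spec_def prime_ideal_in_def ideal_in_def)
  then show ?thesis using spec_lower[OF I] \<open>bot \<in> S\<close> by simp
qed

lemma spec_top:
  fixes S :: "'b::bounded_lattice set"
  assumes I: "I \<in> spec S" and "top \<in> S"
  shows "top \<notin> I"
proof
  assume "top \<in> I"
  then have "S \<subseteq> I" using spec_lower[OF I \<open>top \<in> I\<close>] by auto
  then show False using I spec_subset[OF I] by (auto simp: spec_def prime_ideal_in_def)
qed

lemma specI:
  assumes "I \<subseteq> S" "x \<in> I" "y \<in> S" "y \<notin> I"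
    and "\<And>x y. \<lbrakk>x \<in> I; y \<in> S; y \<le> x\<rbrakk> \<Longrightarrow> y \<in> I"
    and "\<And>x y. \<lbrakk>x \<in> I; y \<in> I\<rbrakk> \<Longrightarrow> sup x y \<in> I"
    and "\<And>x y. \<lbrakk>x \<in> S; y \<in> S; inf x y \<in> I\<rbrakk> \<Longrightarrow> x \<in> I \<or> y \<in> I"
  shows "I \<in> spec S"
  using assms unfolding spec_def prime_ideal_in_def ideal_in_def by blast

lemma mem_Phi_UNIV [simp]: "(a, b) \<in> Phi UNIV \<longleftrightarrow> a \<le> b"
  by (simp add: Phi_def)

lemma Phi_spec_mem:
  fixes I :: "('a::bounded_lattice \<times> 'a) set"
  assumes I: "I \<in> spec (Phi UNIV)" and "a \<le> b"
  shows "(a, b) \<in> I \<longleftrightarrow> (if (bot, top) \<in> I then (a, a) \<in> I else (b, b) \<in> I)"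
proof (cases "(bot, top) \<in> I")
  case True
  have "(a, a) \<in> I \<Longrightarrow> (a, b) \<in> I"
  proof -
    assume "(a, a) \<in> I"
    then have "sup (a, a) (bot, top) \<in> I" using spec_sup[OF I] True by blast
    then show "(a, b) \<in> I" using spec_lower[OF I, of "(a, top)"] \<open>a \<le> b\<close> by simp
  qed
  moreover have "(a, b) \<in> I \<Longrightarrow> (a, a) \<in> I"
    using spec_lower[OF I, of "(a, b)"] \<open>a \<le> b\<close> by simp
  ultimately show ?thesis using True by auto
next
  case False
  have "(a, b) \<in> I \<Longrightarrow> (b, b) \<in> I"
  proof -
    assume "(a, b) \<in> I"
    then have "inf (b, b) (bot, top) \<in> I"
      using spec_lower[OF I, of "(a, b)" "(bot, b)"] \<open>a \<le> b\<close> by simp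
    then show "(b, b) \<in> I" using spec_prime[OF I, of "(b, b)" "(bot, top)"] False by simp
  qed
  moreover have "(b, b) \<in> I \<Longrightarrow> (a, b) \<in> I"
    using spec_lower[OF I, of "(b, b)"] \<open>a \<le> b\<close> by simp
  ultimately show ?thesis using False by auto
qed

definition split_Phi_ideal :: "('a::bounded_lattice \<times> 'a) set \<Rightarrow> 'a set \<times> bool" where
  "split_Phi_ideal I = ({a. (a, a) \<in> I}, (bot, top) \<in> I)"

definition join_Phi_ideal :: "'a::bounded_lattice set \<times> bool \<Rightarrow> ('a \<times> 'a) set" where
  "join_Phi_ideal p = {(a, b). a \<le> b \<and> (if snd p then a else b) \<in> fst p}"

lemma mem_join_Phi_ideal [simp]:
  "(a, b) \<in> join_Phi_ideal (P, i) \<longleftrightarrow> a \<le> b \<and> (if i then a else b) \<in> P"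
  by (simp add: join_Phi_ideal_def)

lemma split_Phi_ideal_in_spec:
  fixes I :: "('a::bounded_lattice \<times> 'a) set"
  assumes I: "I \<in> spec (Phi UNIV)"
  shows "fst (split_Phi_ideal I) \<in> spec UNIV"
proof -
  let ?P = "{a. (a, a) \<in> I}"
  have "?P \<in> spec UNIV"
  proof (rule specI[where x = bot and y = top])
    show "bot \<in> ?P" "top \<notin> ?P"
      using spec_bot[OF I] spec_top[OF I] unfolding bot_prod_def top_prod_def by simp_all
    fix x y :: 'a
    show "x \<in> ?P \<Longrightarrow> y \<in> UNIV \<Longrightarrow> y \<le> x \<Longrightarrow> y \<in> ?P"
      using spec_lower[OF I, of "(x, x)" "(y, y)"] by simp
    show "x \<in> ?P \<Longrightarrow> y \<in> ?P \<Longrightarrow> sup x y \<in> ?P"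
      using spec_sup[OF I, of "(x, x)" "(y, y)"] by simp
    show "x \<in> UNIV \<Longrightarrow> y \<in> UNIV \<Longrightarrow> inf x y \<in> ?P \<Longrightarrow> x \<in> ?P \<or> y \<in> ?P"
      using spec_prime[OF I, of "(x, x)" "(y, y)"] by simp
  qed simp_all
  then show ?thesis by (simp add: split_Phi_ideal_def)
qed

lemma join_Phi_ideal_in_spec:
  fixes P :: "'a::bounded_lattice set"
  assumes P: "P \<in> spec UNIV"
  shows "join_Phi_ideal (P, i) \<in> spec (Phi UNIV)"
proof (rule specI[where x = "(bot, bot)" and y = "(top, top)"])
  show "join_Phi_ideal (P, i) \<subseteq> Phi UNIV" by auto
  show "(bot, bot) \<in> join_Phi_ideal (P, i)" using spec_bot[OF P] by simp
  show "(top, top) \<notin> join_Phi_ideal (P, i)" using spec_top[OF P] by simp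
next
  fix x y :: "'a \<times> 'a"
  show "x \<in> join_Phi_ideal (P, i) \<Longrightarrow> y \<in> Phi UNIV \<Longrightarrow> y \<le> x \<Longrightarrow> y \<in> join_Phi_ideal (P, i)"
    using spec_lower[OF P] by (cases x; cases y; cases i) auto
  show "x \<in> join_Phi_ideal (P, i) \<Longrightarrow> y \<in> join_Phi_ideal (P, i) \<Longrightarrow> sup x y \<in> join_Phi_ideal (P, i)"
    using spec_sup[OF P] by (cases x; cases y; cases i) (auto intro: sup_mono le_supI1 le_supI2)
  show "x \<in> Phi UNIV \<Longrightarrow> y \<in> Phi UNIV \<Longrightarrow> inf x y \<in> join_Phi_ideal (P, i)
      \<Longrightarrow> x \<in> join_Phi_ideal (P, i) \<or> y \<in> join_Phi_ideal (P, i)"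
    using spec_prime[OF P] by (cases x; cases y; cases i) (auto simp: Phi_def)
qed (simp add: Phi_def)

lemma split_join_Phi_ideal:
  assumes "P \<in> spec (UNIV :: 'a::bounded_lattice set)"
  shows "split_Phi_ideal (join_Phi_ideal (P, i)) = (P, i)"
  using spec_bot[OF assms] spec_top[OF assms] by (auto simp: split_Phi_ideal_def)

lemma join_split_Phi_ideal:
  fixes I :: "('a::bounded_lattice \<times> 'a) set"
  assumes I: "I \<in> spec (Phi UNIV)"
  shows "join_Phi_ideal (split_Phi_ideal I) = I"
proof (rule set_eqI)
  fix c :: "'a \<times> 'a"
  obtain a b where c: "c = (a, b)" by (cases c)
  show "c \<in> join_Phi_ideal (split_Phi_ideal I) \<longleftrightarrow> c \<in> I"
  proof (cases "a \<le> b")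
    case True
    then show ?thesis using Phi_spec_mem[OF I True] by (simp add: c split_Phi_ideal_def)
  next
    case False
    then show ?thesis using spec_subset[OF I] by (auto simp: c split_Phi_ideal_def)
  qed
qed

text \<open>The inverse translation is monotone; this is where down-closure of P is used.\<close>

lemma join_Phi_ideal_mono:
  assumes P: "P \<in> spec (UNIV :: 'a::bounded_lattice set)" and "P \<subseteq> Q" "i \<le> j"
  shows "join_Phi_ideal (P, i) \<subseteq> join_Phi_ideal (Q, j)"
proof
  fix c assume "c \<in> join_Phi_ideal (P, i)"
  moreover obtain a b where c: "c = (a, b)" by (cases c)
  ultimately have "a \<le> b" "(if i then a else b) \<in> P" by auto
  then have "(if j then a else b) \<in> P"
    using spec_lower[OF P, of b a] \<open>i \<le> j\<close> by (cases i; cases j) auto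
  then show "c \<in> join_Phi_ideal (Q, j)" using \<open>a \<le> b\<close> \<open>P \<subseteq> Q\<close> c by auto
qed

lemma split_Phi_ideal_order_iff:
  fixes I J :: "('a::bounded_lattice \<times> 'a) set"
  assumes I: "I \<in> spec (Phi UNIV)" and J: "J \<in> spec (Phi UNIV)"
  shows "I \<subseteq> J \<longleftrightarrow>
    fst (split_Phi_ideal I) \<subseteq> fst (split_Phi_ideal J) \<and> snd (split_Phi_ideal I) \<le> snd (split_Phi_ideal J)"
proof
  assume "I \<subseteq> J"
  then show "fst (split_Phi_ideal I) \<subseteq> fst (split_Phi_ideal J) \<and> snd (split_Phi_ideal I) \<le> snd (split_Phi_ideal J)"
    by (auto simp: split_Phi_ideal_def)
next
  assume "fst (split_Phi_ideal I) \<subseteq> fst (split_Phi_ideal J) \<and> snd (split_Phi_ideal I) \<le> snd (split_Phi_ideal J)"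
  then have "join_Phi_ideal (split_Phi_ideal I) \<subseteq> join_Phi_ideal (split_Phi_ideal J)"
    using join_Phi_ideal_mono[OF split_Phi_ideal_in_spec[OF I]] by (metis prod.collapse)
  then show "I \<subseteq> J" by (simp add: join_split_Phi_ideal I J)
qed

section \<open>The spectral topology\<close>

lemma topspace_spec_top:
  assumes "S \<noteq> {}"
  shows "topspace (spec_top S) = spec S"
proof -
  obtain a where "a \<in> S" using assms by auto
  then have "spec S \<subseteq> \<Union>((spec_X S ` S) \<union> ((\<lambda>a. spec S - spec_X S a) ` S))" by blast
  moreover have "\<Union>((spec_X S ` S) \<union> ((\<lambda>a. spec S - spec_X S a) ` S)) \<subseteq> spec S"
    by (auto simp: spec_X_def)
  ultimately show ?thesis unfolding spec_top_def topology_generated_by_topspace by blast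
qed

lemma openin_spec_X: "a \<in> S \<Longrightarrow> openin (spec_top S) (spec_X S a)"
  unfolding spec_top_def by (rule topology_generated_by_Basis) auto

lemma openin_spec_X_compl: "a \<in> S \<Longrightarrow> openin (spec_top S) (spec S - spec_X S a)"
  unfolding spec_top_def by (rule topology_generated_by_Basis) auto

lemma continuous_map_into_spec_top:
  assumes S: "S \<noteq> {}" and f: "f \<in> topspace X \<rightarrow> spec S"
    and omit: "\<And>a. a \<in> S \<Longrightarrow> openin X {x \<in> topspace X. a \<notin> f x}"
    and contain: "\<And>a. a \<in> S \<Longrightarrow> openin X {x \<in> topspace X. a \<in> f x}"
  shows "continuous_map X (spec_top S) f"
  unfolding spec_top_def
proof (rule continuous_on_generated_topo)
  fix U assume "U \<in> spec_X S ` S \<union> (\<lambda>a. spec S - spec_X S a) ` S"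
  then obtain a where a: "a \<in> S" and "U = spec_X S a \<or> U = spec S - spec_X S a" by blast
  then show "openin X (f -` U \<inter> topspace X)"
  proof (elim disjE)
    assume "U = spec_X S a"
    then have "f -` U \<inter> topspace X = {x \<in> topspace X. a \<notin> f x}"
      using f by (auto simp: spec_X_def)
    then show ?thesis using omit[OF a] by simp
  next
    assume "U = spec S - spec_X S a"
    then have "f -` U \<inter> topspace X = {x \<in> topspace X. a \<in> f x}"
      using f by (auto simp: spec_X_def)
    then show ?thesis using contain[OF a] by simp
  qed
next
  show "f ` topspace X \<subseteq> \<Union> (spec_X S ` S \<union> (\<lambda>a. spec S - spec_X S a) ` S)"
    using f topspace_spec_top[OF S] unfolding spec_top_def by auto
qed

lemma continuous_map_into_discrete_bool:
  assumes "openin X {x \<in> topspace X. f x}" and "openin X {x \<in> topspace X. \<not> f x}"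
  shows "continuous_map X (discrete_topology UNIV) f"
proof -
  have value_cases: "f x \<in> U \<longleftrightarrow> (f x \<and> True \<in> U) \<or> (\<not> f x \<and> False \<in> U)" for x U
    by (cases "f x") auto
  have "{x \<in> topspace X. f x \<in> U} =
      (if True \<in> U then {x \<in> topspace X. f x} else {}) \<union>
      (if False \<in> U then {x \<in> topspace X. \<not> f x} else {})" for U
    using value_cases by (cases "True \<in> U"; cases "False \<in> U") auto
  then show ?thesis
    unfolding continuous_map_def using assms by auto
qed

text \<open>Continuity of splitting: X_(a,a) and X_(\<bottom>,\<top>) pull back the subbasis of X(L) \<times> 2.\<close>

lemma continuous_split_Phi_ideal:
  "continuous_map (spec_top (Phi (UNIV :: 'a::bounded_lattice set)))
     (prod_topology (spec_top UNIV) (discrete_topology UNIV)) split_Phi_ideal"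
proof -
  let ?PL = "Phi (UNIV :: 'a set)"
  have top: "topspace (spec_top ?PL) = spec ?PL"
    by (rule topspace_spec_top) (auto simp: Phi_def)
  have diag: "(a, a) \<in> ?PL" and bt: "(bot, top) \<in> ?PL" for a :: 'a by simp_all
  have "continuous_map (spec_top ?PL) (spec_top UNIV) (fst \<circ> split_Phi_ideal)"
  proof (rule continuous_map_into_spec_top)
    show "fst \<circ> split_Phi_ideal \<in> topspace (spec_top ?PL) \<rightarrow> spec UNIV"
      using split_Phi_ideal_in_spec by (auto simp: top)
    fix a :: 'a
    have "{I \<in> topspace (spec_top ?PL). a \<notin> (fst \<circ> split_Phi_ideal) I} = spec_X ?PL (a, a)"
      by (auto simp: top spec_X_def split_Phi_ideal_def)
    then show "openin (spec_top ?PL) {I \<in> topspace (spec_top ?PL). a \<notin> (fst \<circ> split_Phi_ideal) I}"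
      using openin_spec_X[OF diag] by simp
    have "{I \<in> topspace (spec_top ?PL). a \<in> (fst \<circ> split_Phi_ideal) I} = spec ?PL - spec_X ?PL (a, a)"
      by (auto simp: top spec_X_def split_Phi_ideal_def)
    then show "openin (spec_top ?PL) {I \<in> topspace (spec_top ?PL). a \<in> (fst \<circ> split_Phi_ideal) I}"
      using openin_spec_X_compl[OF diag] by simp
  qed simp
  moreover have "continuous_map (spec_top ?PL) (discrete_topology UNIV) (snd \<circ> split_Phi_ideal)"
  proof (rule continuous_map_into_discrete_bool)
    have "{I \<in> topspace (spec_top ?PL). (snd \<circ> split_Phi_ideal) I} = spec ?PL - spec_X ?PL (bot, top)"
      by (auto simp: top spec_X_def split_Phi_ideal_def)
    then show "openin (spec_top ?PL) {I \<in> topspace (spec_top ?PL). (snd \<circ> split_Phi_ideal) I}"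
      using openin_spec_X_compl[OF bt] by simp
    have "{I \<in> topspace (spec_top ?PL). \<not> (snd \<circ> split_Phi_ideal) I} = spec_X ?PL (bot, top)"
      by (auto simp: top spec_X_def split_Phi_ideal_def)
    then show "openin (spec_top ?PL) {I \<in> topspace (spec_top ?PL). \<not> (snd \<circ> split_Phi_ideal) I}"
      using openin_spec_X[OF bt] by simp
  qed
  ultimately show ?thesis by (simp add: continuous_map_pairwise)
qed

text \<open>Continuity of joining: (a, b) \<notin> join (P, i) iff a \<notin> P (for i) resp. b \<notin> P
  (for not i), a finite union of open boxes.\<close>

lemma continuous_join_Phi_ideal:
  "continuous_map (prod_topology (spec_top (UNIV :: 'a::bounded_lattice set)) (discrete_topology UNIV))
     (spec_top (Phi UNIV)) join_Phi_ideal"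
proof (rule continuous_map_into_spec_top)
  let ?Y = "prod_topology (spec_top (UNIV :: 'a set)) (discrete_topology (UNIV :: bool set))"
  show "Phi UNIV \<noteq> {}" by (auto simp: Phi_def)
  show "join_Phi_ideal \<in> topspace ?Y \<rightarrow> spec (Phi UNIV)"
    using join_Phi_ideal_in_spec by (auto simp: topspace_spec_top)
  fix c assume "c \<in> Phi (UNIV :: 'a set)"
  then obtain a b where c: "c = (a, b)" "a \<le> b" by (auto simp: Phi_def)
  have "{p \<in> topspace ?Y. c \<notin> join_Phi_ideal p} =
      spec_X UNIV a \<times> {True} \<union> spec_X UNIV b \<times> {False}"
    using c by (auto simp: topspace_spec_top spec_X_def split: if_splits)
  then show "openin ?Y {p \<in> topspace ?Y. c \<notin> join_Phi_ideal p}"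
    by (simp add: openin_Un openin_prod_Times_iff openin_spec_X)
  have "{p \<in> topspace ?Y. c \<in> join_Phi_ideal p} =
      (spec UNIV - spec_X UNIV a) \<times> {True} \<union> (spec UNIV - spec_X UNIV b) \<times> {False}"
    using c by (auto simp: topspace_spec_top spec_X_def split: if_splits)
  then show "openin ?Y {p \<in> topspace ?Y. c \<in> join_Phi_ideal p}"
    by (simp add: openin_Un openin_prod_Times_iff openin_spec_X_compl)
qed

theorem spec_Phi_iso:
  "priestley_iso_spec_Phi (split_Phi_ideal :: ('a::{bounded_lattice,distrib_lattice} \<times> 'a) set \<Rightarrow> _)"
proof -
  let ?X = "spec_top (Phi (UNIV :: 'a set))"
  let ?Y = "prod_topology (spec_top (UNIV :: 'a set)) (discrete_topology (UNIV :: bool set))"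
  have topX: "topspace ?X = spec (Phi UNIV)"
    by (rule topspace_spec_top) (auto simp: Phi_def)
  have topY: "topspace ?Y = spec UNIV \<times> UNIV"
    by (simp add: topspace_spec_top)
  have inverse: "homeomorphic_maps ?X ?Y split_Phi_ideal join_Phi_ideal"
    unfolding homeomorphic_maps_def topX topY
    using continuous_split_Phi_ideal continuous_join_Phi_ideal
      join_split_Phi_ideal split_join_Phi_ideal by auto
  then have homeo: "homeomorphic_map ?X ?Y split_Phi_ideal"
    by (rule homeomorphic_maps_imp_map)
  then have "bij_betw split_Phi_ideal (spec (Phi UNIV)) (spec (UNIV :: 'a set) \<times> UNIV)"
    unfolding bij_betw_def homeomorphic_eq_everything_map topX topY by blast
  then show ?thesis
    unfolding priestley_iso_spec_Phi_def using split_Phi_ideal_order_iff homeo by blast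
qed

theorem lemma4:
  fixes T :: "'x topology" and le :: "'x \<Rightarrow> 'x \<Rightarrow> bool"
  shows "(priestley_space T le \<longrightarrow> (\<exists>f. bdd_lattice_iso_Phi_E T le f))
         \<and> (\<exists>g :: ('a::{bounded_lattice,distrib_lattice} \<times> 'a) set \<Rightarrow> 'a set \<times> bool.
              priestley_iso_spec_Phi g)"
proof
  show "priestley_space T le \<longrightarrow> (\<exists>f. bdd_lattice_iso_Phi_E T le f)"
  proof
    assume "priestley_space T le"
    then have "\<And>x. x \<in> topspace T \<Longrightarrow> le x x"
      by (simp add: priestley_space_def partial_order_on_space_def)
    then show "\<exists>f. bdd_lattice_iso_Phi_E T le f"
      using Phi_clopen_down_sets_iso by blast
  qed
  show "\<exists>g :: ('a \<times> 'a) set \<Rightarrow> 'a set \<times> bool. priestley_iso_spec_Phi g"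
    using spec_Phi_iso by blast
qed

end
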